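(* Let $N = 2^L$ and $M \in \mathbb{N}$. For an integer $1 \le L_c \le L$ and ranks $r_0, \ldots, r_{L_c-1} \in \mathbb{N}_{>0}$, the truncated hierarchical decomposition with $L_c$ levels has parameters $\mathbf{a}^{0,j,\gamma} \in \mathbb{R}^M$ ($j\in[N]$, $\gamma\in[r_0]$), $\mathbf{a}^{l,j,\gamma} \in \mathbb{R}^{r_{l-1}}$ ($l \in [L_c-1]$, $j\in[N/2^l]$, $\gamma\in[r_l]$), and $\mathbf{a}^{L_c} \in \mathbb{R}^{r_{L_c-1}}$, and generates the order-$N$ tensor (dimension $M$ in each mode) $$\mathcal{A} = \sum_{\alpha=1}^{r_{L_c-1}} a^{L_c}_\alpha \bigotimes_{j=1}^{2^{L-L_c+1}} \phi^{L_c-1,j,\alpha},$$ where $\phi^{0,j,\alpha} := \mathbf{a}^{0,j,\alpha}$ and, for $1\le l\le L_c-1$, $\phi^{l,j,\gamma} = \sum_{\alpha=1}^{r_{l-1}} a^{l,j,\gamma}_\alpha\, \phi^{l-1,2j-1,\alpha} \otimes \phi^{l-1,2j,\alpha}$ (a tensor of order $2^l$). Let $L \ge L_1 > L_2 \ge 1$. Let $\mathcal{A}^{(1)}$ be generated by the truncated decomposition with $L_1$ levels and ranks $r^{(1)}_0,\ldots,r^{(1)}_{L_1-1}$, and define $r := \min\{r^{(1)}_0, \ldots, r^{(1)}_{L_2-1}, M\}$. Then in the Euclidean space of parameter configurations $\{\mathbf{a}^{(1),l,j,\gamma}\}_{l,j,\gamma}$ (together with $\mathbf{a}^{(1),L_1}$)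 of $\mathcal{A}^{(1)}$'s decomposition, the set of configurations for which there exist ranks $r^{(2)}_0,\ldots,r^{(2)}_{L_2-1}$ with $r^{(2)}_{L_2-1} < r^{2^{L-L_2}}$ and parameters of a truncated decomposition with $L_2$ levels and these ranks generating a tensor $\mathcal{A}^{(2)}$ equal to $\mathcal{A}^{(1)}$, has Lebesgue measure zero. The same holds if $\mathcal{A}^{(1)}$'s decomposition is constrained to be shared, i.e. $\mathbf{a}^{(1),l,j,\gamma} = \mathbf{a}^{(1),l,\gamma}$ for all $j$, and one considers the space of configurations of $\{\mathbf{a}^{(1),l,\gamma}\}_{l,\gamma}$ (together with $\mathbf{a}^{(1),L_1}$), while $\mathcal{A}^{(2)}$'s decomposition is unconstrained.
   Context: $[k]=\{1,\ldots,k\}$; $\otimes$ is the tensor product $(\mathcal{A}\otimes\mathcal{B})_{d_1\ldots d_{P+Q}}=\mathcal{A}_{d_1\ldots d_P}\mathcal{B}_{d_{P+1}\ldots d_{P+Q}}$, and $\bigotimes_{j=1}^k \mathcal{B}_j = \mathcal{B}_1\otimes\cdots\otimes\mathcal{B}_k$; $a_\alpha$ denotes entry $\alpha$ of vector $\mathbf{a}$. Measure is Lebesgue measure. *)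

theory Defs
  imports "HOL-Analysis.Analysis"
begin

text \<open>Tensors are represented as real-valued functions on index lists
(0-based indices). A tensor of order P evaluated at a list ds of length P.\<close>

type_synonym tensor = "nat list \<Rightarrow> real"

definition tprod :: "nat \<Rightarrow> tensor \<Rightarrow> tensor \<Rightarrow> tensor" where
  "tprod p A B = (\<lambda>ds. A (take p ds) * B (drop p ds))"

definition tprod_blocks :: "nat \<Rightarrow> nat \<Rightarrow> (nat \<Rightarrow> tensor) \<Rightarrow> tensor" where
  "tprod_blocks k p B = (\<lambda>ds. \<Prod>j<k. B j (take p (drop (j * p) ds)))"

text \<open>Parameter indices (l, j, gamma, alpha), 0-based: entry alpha of the
vector a^{l,j,gamma}; the top vector a^{Lc} is stored at (Lc, 0, 0, alpha).\<close>
type_synonym pidx = "nat \<times> nat \<times> nat \<times> nat"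

fun phi :: "(pidx \<Rightarrow> real) \<Rightarrow> (nat \<Rightarrow> nat) \<Rightarrow> nat \<Rightarrow> nat \<Rightarrow> nat \<Rightarrow> tensor" where
  "phi \<theta> r 0 j g = (\<lambda>ds. \<theta> (0, j, g, hd ds))"
| "phi \<theta> r (Suc l) j g =
     (\<lambda>ds. \<Sum>\<alpha><r l. \<theta> (Suc l, j, g, \<alpha>) *
        tprod (2^l) (phi \<theta> r l (2*j) \<alpha>) (phi \<theta> r l (2*j+1) \<alpha>) ds)"

definition gen_tensor :: "nat \<Rightarrow> nat \<Rightarrow> (nat \<Rightarrow> nat) \<Rightarrow> (pidx \<Rightarrow> real) \<Rightarrow> tensor" where
  "gen_tensor L Lc r \<theta> = (\<lambda>ds. \<Sum>\<alpha><r (Lc - 1). \<theta> (Lc, 0, 0, \<alpha>) *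
      tprod_blocks (2^(L - Lc + 1)) (2^(Lc - 1)) (\<lambda>j. phi \<theta> r (Lc - 1) j \<alpha>) ds)"

definition param_index :: "nat \<Rightarrow> nat \<Rightarrow> nat \<Rightarrow> (nat \<Rightarrow> nat) \<Rightarrow> pidx set" where
  "param_index L M Lc r =
     {(0, j, g, a) | j g a. j < 2^L \<and> g < r 0 \<and> a < M}
   \<union> {(l, j, g, a) | l j g a. 1 \<le> l \<and> l < Lc \<and> j < 2^L div 2^l \<and> g < r l \<and> a < r (l - 1)}
   \<union> {(Lc, 0, 0, a) | a. a < r (Lc - 1)}"

text \<open>Shared parameters (l, gamma, alpha), top vector at (Lc, 0, alpha).\<close>
definition shared_index :: "nat \<Rightarrow> nat \<Rightarrow> (nat \<Rightarrow> nat) \<Rightarrow> (nat \<times> nat \<times> nat) set" where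
  "shared_index M Lc r =
     {(0, g, a) | g a. g < r 0 \<and> a < M}
   \<union> {(l, g, a) | l g a. 1 \<le> l \<and> l < Lc \<and> g < r l \<and> a < r (l - 1)}
   \<union> {(Lc, 0, a) | a. a < r (Lc - 1)}"

definition expand_shared :: "(nat \<times> nat \<times> nat \<Rightarrow> real) \<Rightarrow> pidx \<Rightarrow> real" where
  "expand_shared \<theta>s = (\<lambda>(l, j, g, a). \<theta>s (l, g, a))"

definition tensor_eq :: "nat \<Rightarrow> nat \<Rightarrow> tensor \<Rightarrow> tensor \<Rightarrow> bool" where
  "tensor_eq N M A B \<longleftrightarrow> (\<forall>ds. length ds = N \<and> (\<forall>d\<in>set ds. d < M) \<longrightarrow> A ds = B ds)"

definition low_rep :: "nat \<Rightarrow> nat \<Rightarrow> nat \<Rightarrow> nat \<Rightarrow> tensor \<Rightarrow> bool" where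
  "low_rep L M L2 rr A \<longleftrightarrow>
     (\<exists>r2 :: nat \<Rightarrow> nat. \<exists>\<theta>2 :: pidx \<Rightarrow> real.
        (\<forall>l<L2. r2 l > 0) \<and> r2 (L2 - 1) < rr ^ (2^(L - L2)) \<and>
        tensor_eq (2^L) M (gen_tensor L L2 r2 \<theta>2) A)"

end

theory Submission
  imports Defs "HOL-Computational_Algebra.Polynomial" "Jordan_Normal_Form.Determinant"
begin

text \<open>Every entry of the generated tensor is a polynomial in the parameters, hence so is the
determinant of any fixed square matricization of it. Group the modes into \<open>2^(L-L2+1)\<close> blocks
of size \<open>2^(L2-1)\<close> and use the even blocks as row index and the odd blocks as column index
(each block constant, with value in \<open>[rr]\<close>). A decomposition with \<open>L2\<close> levels writes this
\<open>rr^(2^(L-L2)) \<times> rr^(2^(L-L2))\<close> matrix as a product through \<open>r2 (L2-1) < rr^(2^(L-L2))\<close>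
dimensions, so its determinant vanishes. On the other hand, an explicit parameter configuration of
the \<open>L1\<close>-level decomposition (identities below level \<open>L2\<close>, comparison of the two children at
level \<open>L2\<close>, products above) makes the matricization the identity matrix. So the determinant is a
nonzero polynomial, whose zero set, containing the set in question, is a Lebesgue null set.
The shared case is the same argument, as the witness configuration does not depend on \<open>j\<close>.\<close>

section \<open>Polynomials in finitely many real coordinates\<close>

inductive coord_poly :: "(('i \<Rightarrow> real) \<Rightarrow> real) \<Rightarrow> bool" where
  const: "coord_poly (\<lambda>_. c)"
| coord: "coord_poly (\<lambda>\<theta>. \<theta> i)"
| add: "coord_poly f \<Longrightarrow> coord_poly g \<Longrightarrow> coord_poly (\<lambda>\<theta>. f \<theta> + g \<theta>)"
| mult: "coord_poly f \<Longrightarrow> coord_poly g \<Longrightarrow> coord_poly (\<lambda>\<theta>. f \<theta> * g \<theta>)"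

lemma coord_poly_sum:
  assumes "\<And>a. a \<in> A \<Longrightarrow> coord_poly (f a)"
  shows "coord_poly (\<lambda>\<theta>. \<Sum>a\<in>A. f a \<theta>)"
  using assms
  by (induction A rule: infinite_finite_induct) (auto intro: coord_poly.intros)

lemma coord_poly_prod:
  assumes "\<And>a. a \<in> A \<Longrightarrow> coord_poly (f a)"
  shows "coord_poly (\<lambda>\<theta>. \<Prod>a\<in>A. f a \<theta>)"
  using assms
  by (induction A rule: infinite_finite_induct) (auto intro: coord_poly.intros)

lemma coord_poly_det:
  assumes "\<And>u v. coord_poly (\<lambda>\<theta>. F \<theta> u v)"
  shows "coord_poly (\<lambda>\<theta>. det (mat n n (\<lambda>(u, v). F \<theta> u v)))"
proof -
  have "det (mat n n (\<lambda>(u, v). F \<theta> u v)) =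
      (\<Sum>p | p permutes {0..<n}. signof p * (\<Prod>i = 0..<n. F \<theta> i (p i)))" for \<theta>
    unfolding det_def by (auto intro!: sum.cong prod.cong simp: permutes_in_image)
  then show ?thesis
    by (auto intro!: coord_poly_sum coord_poly_prod coord_poly.intros assms)
qed

lemma coord_poly_measurable:
  "coord_poly f \<Longrightarrow> f \<in> borel_measurable (PiM I (\<lambda>_. lborel))"
proof (induction rule: coord_poly.induct)
  case (coord i)
  show ?case
  proof (cases "i \<in> I")
    case False
    then have "\<forall>\<theta>\<in>space (PiM I (\<lambda>_. lborel)). \<theta> i = (undefined :: real)"
      by (auto simp: space_PiM PiE_def extensional_def)
    then show ?thesis
      by (subst measurable_cong[where g = "\<lambda>_. undefined"]) auto
  qed (auto intro: measurable_component_singleton)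
qed auto

lemma coord_poly_as_poly_in_coord:
  assumes "coord_poly f"
  shows "\<exists>P. (\<forall>\<theta> x. f (\<theta>(i := x)) = poly (P \<theta>) x) \<and> (\<forall>k. coord_poly (\<lambda>\<theta>. coeff (P \<theta>) k))"
  using assms
proof (induction rule: coord_poly.induct)
  case (const c)
  show ?case by (rule exI[of _ "\<lambda>_. [:c:]"]) (auto intro: coord_poly.intros)
next
  case (coord j)
  show ?case
  proof (cases "j = i")
    case True
    then show ?thesis by (intro exI[of _ "\<lambda>_. [:0, 1:]"]) (auto intro: coord_poly.intros)
  next
    case False
    have "coord_poly (\<lambda>\<theta>. coeff [:\<theta> j:] k)" for k
      by (cases k) (auto intro: coord_poly.intros)
    with False show ?thesis by (intro exI[of _ "\<lambda>\<theta>. [:\<theta> j:]"]) auto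
  qed
next
  case (add f g)
  then obtain P Q where
      "\<forall>\<theta> x. f (\<theta>(i := x)) = poly (P \<theta>) x" "\<forall>k. coord_poly (\<lambda>\<theta>. coeff (P \<theta>) k)"
      "\<forall>\<theta> x. g (\<theta>(i := x)) = poly (Q \<theta>) x" "\<forall>k. coord_poly (\<lambda>\<theta>. coeff (Q \<theta>) k)"
    by blast
  then show ?case
    by (intro exI[of _ "\<lambda>\<theta>. P \<theta> + Q \<theta>"]) (auto intro: coord_poly.intros simp del: fun_upd_apply)
next
  case (mult f g)
  then obtain P Q where
      "\<forall>\<theta> x. f (\<theta>(i := x)) = poly (P \<theta>) x" "\<forall>k. coord_poly (\<lambda>\<theta>. coeff (P \<theta>) k)"
      "\<forall>\<theta> x. g (\<theta>(i := x)) = poly (Q \<theta>) x" "\<forall>k. coord_poly (\<lambda>\<theta>. coeff (Q \<theta>) k)"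
    by blast
  then show ?case
    by (intro exI[of _ "\<lambda>\<theta>. P \<theta> * Q \<theta>"])
      (auto simp: coeff_mult simp del: fun_upd_apply intro!: coord_poly_sum coord_poly.intros)
qed

lemma (in product_sigma_finite) null_sets_PiM_insert:
  assumes "finite I" "i \<notin> I" "Z \<in> sets (PiM (insert i I) M)"
    and "AE \<theta> in PiM I M. AE x in M i. \<theta>(i := x) \<notin> Z"
  shows "Z \<in> null_sets (PiM (insert i I) M)"
proof -
  have "emeasure (PiM (insert i I) M) Z = (\<integral>\<^sup>+ \<theta>. indicator Z \<theta> \<partial>PiM (insert i I) M)"
    using assms(3) by simp
  also have "\<dots> = (\<integral>\<^sup>+ \<theta>. (\<integral>\<^sup>+ x. indicator Z (\<theta>(i := x)) \<partial>M i) \<partial>PiM I M)"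
    using assms(1-3) by (intro product_nn_integral_insert) auto
  also have "\<dots> = (\<integral>\<^sup>+ \<theta>. 0 \<partial>PiM I M)"
    using assms(4)
  proof (intro nn_integral_cong_AE, elim eventually_mono)
    fix \<theta> assume "AE x in M i. \<theta>(i := x) \<notin> Z"
    then have "(\<integral>\<^sup>+ x. indicator Z (\<theta>(i := x)) \<partial>M i) = (\<integral>\<^sup>+ x. 0 \<partial>M i)"
      by (intro nn_integral_cong_AE) (auto elim!: eventually_mono)
    then show "(\<integral>\<^sup>+ x. indicator Z (\<theta>(i := x)) \<partial>M i) = 0" by simp
  qed
  finally show ?thesis using assms(3) by auto
qed

text \<open>Induction on the coordinates: in the last coordinate \<open>f\<close> is a univariate polynomial whose
\<open>k\<close>-th coefficient is a nonzero polynomial in the others; off the null zero set of that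
coefficient the section has finitely many zeros.\<close>

lemma coord_poly_zero_set_null:
  assumes "finite I" "coord_poly f" "\<theta>\<^sub>0 \<in> I \<rightarrow>\<^sub>E UNIV" "f \<theta>\<^sub>0 \<noteq> 0"
  shows "{\<theta> \<in> I \<rightarrow>\<^sub>E UNIV. f \<theta> = 0} \<in> null_sets (PiM I (\<lambda>_. lborel))"
  using assms
proof (induction I arbitrary: f \<theta>\<^sub>0 rule: finite_induct)
  case empty
  then have "{\<theta> \<in> {} \<rightarrow>\<^sub>E UNIV. f \<theta> = 0} = {}" by auto
  then show ?case by (simp only:) simp
next
  case (insert i I)
  interpret product_sigma_finite "\<lambda>_. lborel" by standard
  let ?Z = "{\<theta> \<in> insert i I \<rightarrow>\<^sub>E UNIV. f \<theta> = 0}"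
  have "?Z = f -` {0} \<inter> space (PiM (insert i I) (\<lambda>_. lborel))"
    by (auto simp: space_PiM)
  then have Z: "?Z \<in> sets (PiM (insert i I) (\<lambda>_. lborel))"
    using coord_poly_measurable[OF insert.prems(1)] by simp
  obtain P where P: "\<And>\<theta> x. f (\<theta>(i := x)) = poly (P \<theta>) x" "\<And>k. coord_poly (\<lambda>\<theta>. coeff (P \<theta>) k)"
    using coord_poly_as_poly_in_coord[OF insert.prems(1)] by blast
  define \<theta>\<^sub>0' where "\<theta>\<^sub>0' = \<theta>\<^sub>0(i := undefined)"
  have \<theta>\<^sub>0': "\<theta>\<^sub>0' \<in> I \<rightarrow>\<^sub>E UNIV"
    using insert.prems(2) insert.hyps(2) by (auto simp: \<theta>\<^sub>0'_def PiE_def extensional_def)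
  have "poly (P \<theta>\<^sub>0') (\<theta>\<^sub>0 i) \<noteq> 0"
    using P(1)[of \<theta>\<^sub>0' "\<theta>\<^sub>0 i"] insert.prems(3) by (simp add: \<theta>\<^sub>0'_def)
  then obtain k where k: "coeff (P \<theta>\<^sub>0') k \<noteq> 0"
    by (metis leading_coeff_0_iff poly_0)
  let ?N = "{\<theta> \<in> I \<rightarrow>\<^sub>E UNIV. coeff (P \<theta>) k = 0}"
  have "AE x in lborel. \<theta>(i := x) \<notin> ?Z" if "\<theta> \<notin> ?N" "\<theta> \<in> space (PiM I (\<lambda>_. lborel))" for \<theta>
  proof -
    from that have "P \<theta> \<noteq> 0" by (auto simp: space_PiM)
    then have "{x. poly (P \<theta>) x = 0} \<in> null_sets lborel"
      by (intro finite_imp_null_set_lborel poly_roots_finite)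
    then show ?thesis
      by (rule AE_I') (auto simp: P(1))
  qed
  then have "AE \<theta> in PiM I (\<lambda>_. lborel). AE x in lborel. \<theta>(i := x) \<notin> ?Z"
    using insert.IH[OF P(2) \<theta>\<^sub>0' k] by (intro AE_I'[of ?N]) auto
  then show ?case
    using insert.hyps Z by (intro null_sets_PiM_insert) auto
qed

section \<open>Matrices factoring through fewer dimensions\<close>

lemma det_eq_0_if_factors_through:
  fixes G :: "nat \<Rightarrow> nat \<Rightarrow> 'a :: idom"
  assumes "R < n" and "\<And>u v. u < n \<Longrightarrow> v < n \<Longrightarrow> G u v = (\<Sum>a<R. X u a * Y a v)"
  shows "det (mat n n (\<lambda>(u, v). G u v)) = 0"
proof -
  define X' where "X' = mat n n (\<lambda>(u, a). X u a)"
  define Y' where "Y' = mat n n (\<lambda>(a, v). if a < R then Y a v else 0)"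
  have "mat n n (\<lambda>(u, v). G u v) = X' * Y'"
  proof (rule eq_matI)
    fix u v assume "u < dim_row (X' * Y')" "v < dim_col (X' * Y')"
    then have u: "u < n" and v: "v < n" by (auto simp: X'_def Y'_def)
    have "(X' * Y') $$ (u, v) = (\<Sum>a<n. X u a * (if a < R then Y a v else 0))"
      using u v by (simp add: X'_def Y'_def scalar_prod_def atLeast0LessThan)
    also have "\<dots> = (\<Sum>a<R. X u a * Y a v)"
      using assms(1) by (intro sum.mono_neutral_cong_right) auto
    finally show "mat n n (\<lambda>(u, v). G u v) $$ (u, v) = (X' * Y') $$ (u, v)"
      using assms(2) u v by simp
  qed (auto simp: X'_def Y'_def)
  moreover have "det Y' = 0"
    using assms(1) unfolding det_def Y'_def
    by (auto intro!: sum.neutral bexI[of _ "n - 1"] simp: permutes_in_image)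
  ultimately show ?thesis
    by (simp add: det_mult[of _ n] X'_def Y'_def)
qed

section \<open>The matricization\<close>

lemma prod_lessThan_double:
  "(\<Prod>j<2 * (K :: nat). h j) = (\<Prod>k<K. h (2 * k) * (h (2 * k + 1) :: 'a :: comm_monoid_mult))"
  by (induction K) (simp_all add: mult_ac)

lemma prod_lessThan_mult_blocks:
  "(\<Prod>j<(T :: nat). \<Prod>k\<in>{j * m..<(j + 1) * m}. e k) = (\<Prod>k<T * m. (e k :: 'a :: comm_monoid_mult))"
proof (induction T)
  case (Suc T)
  have "(\<Prod>k<Suc T * m. e k) = (\<Prod>k\<in>{0..<T * m}. e k) * (\<Prod>k\<in>{T * m..<(T + 1) * m}. e k)"
    by (subst prod.atLeastLessThan_concat) (auto simp: atLeast0LessThan)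
  then show ?case using Suc by (simp add: atLeast0LessThan)
qed simp

lemma sum_of_bool_eq_mult:
  "(\<Sum>\<alpha><(R :: nat). of_bool (g = \<alpha>) * X \<alpha>) = (if g < R then X g else (0 :: 'a :: comm_semiring_1))"
proof -
  have "{..<R} \<inter> {\<alpha>. g = \<alpha>} = (if g < R then {g} else {})" by auto
  then show ?thesis by simp
qed

definition digit :: "nat \<Rightarrow> nat \<Rightarrow> nat \<Rightarrow> nat" where
  "digit b u k = u div b ^ k mod b"

lemma digit_less: "0 < b \<Longrightarrow> digit b u k < b"
  by (simp add: digit_def)

lemma digits_inj:
  "u < b ^ K \<Longrightarrow> v < b ^ K \<Longrightarrow> (\<forall>k<K. digit b u k = digit b v k) \<Longrightarrow> u = v"
proof (induction K arbitrary: u v)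
  case (Suc K)
  have b: "0 < b" using Suc.prems(1) by (cases b) auto
  have "u div b = v div b"
  proof (rule Suc.IH)
    show "u div b < b ^ K" "v div b < b ^ K"
      using Suc.prems(1,2) b by (simp_all add: div_less_iff_less_mult mult.commute)
    show "\<forall>k<K. digit b (u div b) k = digit b (v div b) k"
      using Suc.prems(3) by (auto simp: digit_def div_mult2_eq)
  qed
  moreover have "u mod b = v mod b"
    using Suc.prems(3)[rule_format, of 0] by (simp add: digit_def)
  ultimately show ?case by (metis div_mult_mod_eq)
qed simp

text \<open>The index list \<open>matricization_index p b K u v\<close> consists of \<open>2 K\<close> constant blocks of length
\<open>p\<close>: block \<open>2 k\<close> carries the \<open>k\<close>-th base-\<open>b\<close> digit of the row index \<open>u\<close>, block \<open>2 k + 1\<close> that of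
the column index \<open>v\<close>.\<close>

definition index_block :: "nat \<Rightarrow> nat \<Rightarrow> nat \<Rightarrow> nat \<Rightarrow> nat \<Rightarrow> nat list" where
  "index_block p b u v j = replicate p (digit b (if even j then u else v) (j div 2))"

definition matricization_index :: "nat \<Rightarrow> nat \<Rightarrow> nat \<Rightarrow> nat \<Rightarrow> nat \<Rightarrow> nat list" where
  "matricization_index p b K u v = concat (map (index_block p b u v) [0..<2 * K])"

definition node_indices :: "nat \<Rightarrow> nat \<Rightarrow> nat list \<Rightarrow> nat list" where
  "node_indices l j xs = take (2 ^ l) (drop (j * 2 ^ l) xs)"

lemma tprod_node_indices:
  "tprod (2 ^ l) F G (node_indices (Suc l) j xs) = F (node_indices l (2 * j) xs) * G (node_indices l (2 * j + 1) xs)"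
proof -
  have "take (2 ^ l) (node_indices (Suc l) j xs) = node_indices l (2 * j) xs"
    by (simp add: node_indices_def mult_ac)
  moreover have "drop (2 ^ l) (node_indices (Suc l) j xs) = node_indices l (2 * j + 1) xs"
    by (simp add: node_indices_def drop_take algebra_simps)
  ultimately show ?thesis by (simp add: tprod_def)
qed

lemma take_drop_concat_equal_length:
  assumes "\<And>i. length (f i) = p" and "j < m"
  shows "take p (drop (j * p) (concat (map f [0..<m]))) = f j"
proof -
  have "[0..<m] = [0..<j] @ j # [Suc j..<m]"
    using assms(2) upt_add_eq_append[of 0 j "m - j"] by (simp add: upt_conv_Cons)
  moreover have "length (concat (map f [0..<j])) = j * p"
    using assms(1) by (simp add: length_concat comp_def sum_list_triv)
  ultimately show ?thesis using assms(1) by simp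
qed

lemma matricization_index_block:
  "j < 2 * K \<Longrightarrow> take p (drop (j * p) (matricization_index p b K u v)) = index_block p b u v j"
  unfolding matricization_index_def by (rule take_drop_concat_equal_length) (auto simp: index_block_def)

lemma length_matricization_index: "length (matricization_index p b K u v) = 2 * K * p"
  by (simp add: matricization_index_def index_block_def length_concat comp_def sum_list_triv)

lemma set_matricization_index_less:
  "0 < b \<Longrightarrow> d \<in> set (matricization_index p b K u v) \<Longrightarrow> d < b"
  by (auto simp: matricization_index_def index_block_def digit_less)

definition matricization_det :: "nat \<Rightarrow> nat \<Rightarrow> nat \<Rightarrow> tensor \<Rightarrow> real" where
  "matricization_det L L2 rr A = (let n = rr ^ 2 ^ (L - L2) in
     det (mat n n (\<lambda>(u, v). A (matricization_index (2 ^ (L2 - 1)) rr (2 ^ (L - L2)) u v))))"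

text \<open>In the last level of an \<open>L2\<close>-level decomposition the row digits only meet the even factors
and the column digits only the odd ones.\<close>

lemma low_rep_imp_matricization_det_eq_0:
  assumes "1 \<le> L2" "L2 \<le> L" "rr \<le> M" "low_rep L M L2 rr A"
  shows "matricization_det L L2 rr A = 0"
proof -
  let ?K = "2 ^ (L - L2) :: nat" and ?p = "2 ^ (L2 - 1) :: nat"
  obtain r2 \<theta>2 where r2: "r2 (L2 - 1) < rr ^ ?K"
    and eq: "tensor_eq (2 ^ L) M (gen_tensor L L2 r2 \<theta>2) A"
    using assms(4) unfolding low_rep_def by blast
  let ?\<phi> = "phi \<theta>2 r2 (L2 - 1)"
  define X where "X u \<alpha> = \<theta>2 (L2, 0, 0, \<alpha>) * (\<Prod>k<?K. ?\<phi> (2 * k) \<alpha> (replicate ?p (digit rr u k)))"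
    for u \<alpha>
  define Y where "Y \<alpha> v = (\<Prod>k<?K. ?\<phi> (2 * k + 1) \<alpha> (replicate ?p (digit rr v k)))" for \<alpha> v
  have "det (mat (rr ^ ?K) (rr ^ ?K) (\<lambda>(u, v). A (matricization_index ?p rr ?K u v))) = 0"
  proof (rule det_eq_0_if_factors_through[OF r2])
    fix u v assume "u < rr ^ ?K" "v < rr ^ ?K"
    then have rr: "0 < rr" by (cases rr) (auto simp: power_0_left)
    let ?ds = "matricization_index ?p rr ?K u v"
    have "length ?ds = 2 ^ (1 + (L - L2) + (L2 - 1))"
      by (simp add: length_matricization_index power_add)
    then have "length ?ds = 2 ^ L"
      using assms(1,2) by simp
    moreover have "\<forall>d\<in>set ?ds. d < M"
      using set_matricization_index_less[OF rr] assms(3) by fastforce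
    ultimately have "A ?ds = gen_tensor L L2 r2 \<theta>2 ?ds"
      using eq unfolding tensor_eq_def by auto
    also have "\<dots> = (\<Sum>\<alpha><r2 (L2 - 1). \<theta>2 (L2, 0, 0, \<alpha>) *
        (\<Prod>j<2 * ?K. ?\<phi> j \<alpha> (index_block ?p rr u v j)))"
      unfolding gen_tensor_def tprod_blocks_def Suc_eq_plus1[symmetric] power_Suc
      by (intro sum.cong refl arg_cong2[where f = "(*)"] prod.cong) (auto simp: matricization_index_block)
    also have "\<dots> = (\<Sum>\<alpha><r2 (L2 - 1). X u \<alpha> * Y \<alpha> v)"
      unfolding prod_lessThan_double X_def Y_def by (simp add: index_block_def prod.distrib mult.assoc)
    finally show "A ?ds = (\<Sum>\<alpha><r2 (L2 - 1). X u \<alpha> * Y \<alpha> v)" .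
  qed
  then show ?thesis by (simp add: matricization_det_def)
qed

lemma coord_poly_phi: "coord_poly (\<lambda>\<theta>. phi (\<lambda>x. \<theta> (c x)) r l j g ds)"
  by (induction l arbitrary: j g ds) (auto simp: tprod_def intro!: coord_poly_sum coord_poly.intros)

lemma coord_poly_matricization_det_gen_tensor:
  "coord_poly (\<lambda>\<theta>. matricization_det L L2 rr (gen_tensor L Lc r (\<lambda>x. \<theta> (c x))))"
  unfolding matricization_det_def Let_def gen_tensor_def tprod_blocks_def
  by (intro coord_poly_det) (auto intro!: coord_poly_sum coord_poly_prod coord_poly.intros coord_poly_phi)

section \<open>A configuration with full matricization rank\<close>

definition witness_param :: "nat \<Rightarrow> nat \<Rightarrow> nat \<Rightarrow> nat \<Rightarrow> nat \<Rightarrow> real" where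
  "witness_param L1 L2 l g a =
     (if l < L2 then of_bool (g = a)
      else if l = L2 then of_bool (g = 0)
      else if l < L1 then of_bool (g = 0 \<and> a = 0)
      else of_bool (a = 0))"

context
  fixes L M L1 L2 :: nat and r1 :: "nat \<Rightarrow> nat" and rr :: nat and \<theta> :: "pidx \<Rightarrow> real"
  assumes L1_le: "L1 \<le> L" and L2_less: "L2 < L1" and L2_pos: "1 \<le> L2"
    and r1_pos: "\<forall>l<L1. r1 l > 0"
    and rr_le_M: "rr \<le> M" and rr_le_r1: "\<forall>l<L2. rr \<le> r1 l"
    and witness: "\<forall>l j g a. (l, j, g, a) \<in> param_index L M L1 r1 \<longrightarrow> \<theta> (l, j, g, a) = witness_param L1 L2 l g a"
begin

lemma witness_leaf: "j < 2 ^ L \<Longrightarrow> g < r1 0 \<Longrightarrow> a < M \<Longrightarrow> \<theta> (0, j, g, a) = witness_param L1 L2 0 g a"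
  using witness by (auto simp: param_index_def)

lemma witness_inner:
  assumes "0 < l" "l < L1" "j < 2 ^ (L - l)" "g < r1 l" "a < r1 (l - 1)"
  shows "\<theta> (l, j, g, a) = witness_param L1 L2 l g a"
proof -
  have "2 ^ L div 2 ^ l = (2 :: nat) ^ (L - l)"
    using assms(2) L1_le by (simp add: power_diff)
  then show ?thesis using assms witness by (auto simp: param_index_def)
qed

lemma witness_top: "a < r1 (L1 - 1) \<Longrightarrow> \<theta> (L1, 0, 0, a) = of_bool (a = 0)"
  using witness L2_less by (auto simp: param_index_def witness_param_def)

lemma phi_witness_below:
  "l < L2 \<Longrightarrow> j < 2 ^ (L - l) \<Longrightarrow> g < r1 l \<Longrightarrow> a < rr \<Longrightarrow>
    phi \<theta> r1 l j g (replicate (2 ^ l) a) = of_bool (g = a)"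
proof (induction l arbitrary: j g)
  case 0
  then show ?case using witness_leaf rr_le_M by (simp add: witness_param_def)
next
  case (Suc l)
  have "2 * j < 2 ^ (L - l)" "2 * j + 1 < 2 ^ (L - l)"
    using Suc.prems(1,2) L2_less L1_le by (simp_all add: Suc_diff_Suc[symmetric])
  then have "phi \<theta> r1 (Suc l) j g (replicate (2 ^ Suc l) a) = (\<Sum>\<alpha><r1 l. of_bool (g = \<alpha>) * of_bool (\<alpha> = a))"
    using Suc L2_less by (auto simp: tprod_def witness_inner witness_param_def intro!: sum.cong)
  also have "\<dots> = of_bool (g = a)"
    using rr_le_r1[rule_format, of l] Suc.prems by (simp add: sum_of_bool_eq_mult)
  finally show ?case .
qed

lemma phi_witness_at_L2:
  assumes "j < 2 ^ (L - L2)" "g < r1 L2" "0 < rr"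
  shows "phi \<theta> r1 L2 j g (node_indices L2 j (matricization_index (2 ^ (L2 - 1)) rr (2 ^ (L - L2)) u v)) =
    of_bool (g = 0) * of_bool (digit rr u j = digit rr v j)"
proof -
  obtain l where l: "L2 = Suc l" using L2_pos by (cases L2) auto
  let ?ds = "matricization_index (2 ^ l) rr (2 ^ (L - L2)) u v"
  let ?x = "digit rr u j" and ?y = "digit rr v j"
  have "2 * j < 2 * 2 ^ (L - L2)" "2 * j + 1 < 2 * 2 ^ (L - L2)"
    using assms(1) by simp_all
  then have "node_indices l (2 * j) ?ds = replicate (2 ^ l) ?x" "node_indices l (2 * j + 1) ?ds = replicate (2 ^ l) ?y"
    by (simp_all only: node_indices_def matricization_index_block) (simp_all add: index_block_def)
  then have "phi \<theta> r1 L2 j g (node_indices L2 j ?ds) = (\<Sum>\<alpha><r1 l. \<theta> (L2, j, g, \<alpha>) *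
      (phi \<theta> r1 l (2 * j) \<alpha> (replicate (2 ^ l) ?x) * phi \<theta> r1 l (2 * j + 1) \<alpha> (replicate (2 ^ l) ?y)))"
    unfolding l by (simp only: phi.simps tprod_node_indices)
  also have "\<dots> = (\<Sum>\<alpha><r1 l. of_bool (g = 0) * (of_bool (?x = \<alpha>) * of_bool (\<alpha> = ?y)))"
  proof (rule sum.cong[OF refl])
    fix \<alpha> assume "\<alpha> \<in> {..<r1 l}"
    moreover have "2 * j < 2 ^ (L - l)" "2 * j + 1 < 2 ^ (L - l)"
      using assms(1) l L2_less L1_le by (simp_all add: Suc_diff_Suc[symmetric])
    ultimately show "\<theta> (L2, j, g, \<alpha>) *
        (phi \<theta> r1 l (2 * j) \<alpha> (replicate (2 ^ l) ?x) * phi \<theta> r1 l (2 * j + 1) \<alpha> (replicate (2 ^ l) ?y)) =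
        of_bool (g = 0) * (of_bool (?x = \<alpha>) * of_bool (\<alpha> = ?y))"
      using assms l L2_less by (simp add: witness_inner phi_witness_below witness_param_def digit_less)
  qed
  also have "\<dots> = of_bool (g = 0) * of_bool (?x = ?y)"
    using rr_le_r1[rule_format, of l] l digit_less[OF assms(3), of u j]
    by (simp add: sum_distrib_left[symmetric] sum_of_bool_eq_mult)
  finally show ?thesis using l by simp
qed

lemma phi_witness_above:
  assumes "L2 + d < L1" "j < 2 ^ (L - (L2 + d))" "g < r1 (L2 + d)" "0 < rr"
  shows "phi \<theta> r1 (L2 + d) j g (node_indices (L2 + d) j (matricization_index (2 ^ (L2 - 1)) rr (2 ^ (L - L2)) u v)) =
    of_bool (g = 0) * (\<Prod>k\<in>{j * 2 ^ d..<(j + 1) * 2 ^ d}. of_bool (digit rr u k = digit rr v k))"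
  using assms
proof (induction d arbitrary: j g)
  case 0
  then show ?case using phi_witness_at_L2 by simp
next
  case (Suc d)
  let ?ds = "matricization_index (2 ^ (L2 - 1)) rr (2 ^ (L - L2)) u v"
  let ?l = "L2 + d"
  let ?e = "\<lambda>k. of_bool (digit rr u k = digit rr v k) :: real"
  let ?\<phi> = "\<lambda>j. phi \<theta> r1 ?l j 0 (node_indices ?l j ?ds)"
  have j: "2 * j < 2 ^ (L - ?l)" "2 * j + 1 < 2 ^ (L - ?l)"
    using Suc.prems(1,2) L1_le by (simp_all add: Suc_diff_Suc[symmetric])
  have r1: "0 < r1 ?l" using r1_pos Suc.prems(1) by auto
  have "phi \<theta> r1 (Suc ?l) j g (node_indices (Suc ?l) j ?ds) =
      (\<Sum>\<alpha><r1 ?l. of_bool (g = 0) * (of_bool (0 = \<alpha>) * (?\<phi> (2 * j) * ?\<phi> (2 * j + 1))))"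
    using Suc.prems L2_pos
    by (auto simp: tprod_node_indices witness_inner witness_param_def intro!: sum.cong)
  also have "\<dots> = of_bool (g = 0) * (?\<phi> (2 * j) * ?\<phi> (2 * j + 1))"
    using r1 by (simp add: sum_distrib_left[symmetric] sum_of_bool_eq_mult)
  also have "?\<phi> (2 * j) * ?\<phi> (2 * j + 1) =
      (\<Prod>k\<in>{2 * j * 2 ^ d..<(2 * j + 1) * 2 ^ d}. ?e k) * (\<Prod>k\<in>{(2 * j + 1) * 2 ^ d..<(2 * j + 2) * 2 ^ d}. ?e k)"
    using Suc.IH[OF _ j(1)] Suc.IH[OF _ j(2)] Suc.prems r1 by (simp add: add.assoc)
  also have "\<dots> = (\<Prod>k\<in>{j * 2 ^ Suc d..<(j + 1) * 2 ^ Suc d}. ?e k)"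
    by (subst prod.atLeastLessThan_concat) (auto simp: algebra_simps)
  finally show ?case by simp
qed

lemma gen_tensor_witness_matricized:
  assumes "0 < rr"
  shows "gen_tensor L L1 r1 \<theta> (matricization_index (2 ^ (L2 - 1)) rr (2 ^ (L - L2)) u v) =
    (\<Prod>k<2 ^ (L - L2). of_bool (digit rr u k = digit rr v k))"
proof -
  let ?ds = "matricization_index (2 ^ (L2 - 1)) rr (2 ^ (L - L2)) u v"
  define d where "d = L1 - 1 - L2"
  have d: "L2 + d = L1 - 1" using L2_less by (simp add: d_def)
  have r1: "0 < r1 (L1 - 1)" using r1_pos L2_less by auto
  have "gen_tensor L L1 r1 \<theta> ?ds =
      (\<Sum>\<alpha><r1 (L1 - 1). of_bool (0 = \<alpha>) * (\<Prod>j<2 ^ (L - L1 + 1). phi \<theta> r1 (L1 - 1) j \<alpha> (node_indices (L1 - 1) j ?ds)))"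
    unfolding gen_tensor_def tprod_blocks_def node_indices_def by (auto simp: witness_top intro!: sum.cong)
  also have "\<dots> = (\<Prod>j<2 ^ (L - L1 + 1). phi \<theta> r1 (L1 - 1) j 0 (node_indices (L1 - 1) j ?ds))"
    using r1 by (simp add: sum_of_bool_eq_mult)
  also have "\<dots> = (\<Prod>j<2 ^ (L - L1 + 1). \<Prod>k\<in>{j * 2 ^ d..<(j + 1) * 2 ^ d}. of_bool (digit rr u k = digit rr v k))"
  proof (rule prod.cong[OF refl])
    fix j :: nat assume "j \<in> {..<2 ^ (L - L1 + 1)}"
    then have "j < 2 ^ (L - (L2 + d))" using d L2_less L1_le by (simp add: Suc_diff_le)
    then show "phi \<theta> r1 (L1 - 1) j 0 (node_indices (L1 - 1) j ?ds) =
        (\<Prod>k\<in>{j * 2 ^ d..<(j + 1) * 2 ^ d}. of_bool (digit rr u k = digit rr v k))"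
      using phi_witness_above[of d j 0] d assms r1 L2_less by simp
  qed
  also have "\<dots> = (\<Prod>k<2 ^ (L - L1 + 1) * 2 ^ d. of_bool (digit rr u k = digit rr v k))"
    by (rule prod_lessThan_mult_blocks)
  also have "L - L1 + 1 + d = L - L2"
    using L2_less L1_le by (simp add: d_def)
  then have "(2 :: nat) ^ (L - L1 + 1) * 2 ^ d = 2 ^ (L - L2)"
    by (metis power_add)
  finally show ?thesis .
qed

lemma matricization_det_witness: "matricization_det L L2 rr (gen_tensor L L1 r1 \<theta>) = 1"
proof -
  let ?n = "rr ^ 2 ^ (L - L2)"
  have "mat ?n ?n (\<lambda>(u, v). gen_tensor L L1 r1 \<theta> (matricization_index (2 ^ (L2 - 1)) rr (2 ^ (L - L2)) u v))
      = 1\<^sub>m ?n"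
  proof (rule eq_matI)
    fix u v assume "u < dim_row (1\<^sub>m ?n)" "v < dim_col (1\<^sub>m ?n)"
    then have u: "u < ?n" and v: "v < ?n" by auto
    then have "0 < rr" by (cases rr) (auto simp: power_0_left)
    with u v show "mat ?n ?n (\<lambda>(u, v). gen_tensor L L1 r1 \<theta> (matricization_index (2 ^ (L2 - 1)) rr (2 ^ (L - L2)) u v))
        $$ (u, v) = 1\<^sub>m ?n $$ (u, v)"
      using digits_inj[OF u v] gen_tensor_witness_matricized[OF \<open>0 < rr\<close>, of u v] by auto
  qed auto
  then show ?thesis by (simp add: matricization_det_def)
qed

end

text \<open>The map \<open>c\<close> reparametrizes the decomposition: the identity for free parameters,
\<open>(l, j, g, a) \<mapsto> (l, g, a)\<close> for shared ones.\<close>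

lemma null_sets_low_rep_gen_tensor:
  fixes c :: "pidx \<Rightarrow> 'i"
  assumes "L1 \<le> L" "L2 < L1" "1 \<le> L2" "\<forall>l<L1. r1 l > 0" "rr \<le> M" "\<forall>l<L2. rr \<le> r1 l"
    and "finite I" "\<theta>\<^sub>0 \<in> I \<rightarrow>\<^sub>E UNIV"
    and "\<forall>l j g a. (l, j, g, a) \<in> param_index L M L1 r1 \<longrightarrow> \<theta>\<^sub>0 (c (l, j, g, a)) = witness_param L1 L2 l g a"
  shows "{\<theta> \<in> I \<rightarrow>\<^sub>E UNIV. low_rep L M L2 rr (gen_tensor L L1 r1 (\<lambda>x. \<theta> (c x)))}
    \<in> null_sets (completion (PiM I (\<lambda>_. lborel)))"
proof -
  let ?F = "\<lambda>\<theta>. matricization_det L L2 rr (gen_tensor L L1 r1 (\<lambda>x. \<theta> (c x)))"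
  have "?F \<theta>\<^sub>0 = 1"
    using matricization_det_witness[OF assms(1-6), of "\<lambda>x. \<theta>\<^sub>0 (c x)"] assms(9) by simp
  then have "{\<theta> \<in> I \<rightarrow>\<^sub>E UNIV. ?F \<theta> = 0} \<in> null_sets (PiM I (\<lambda>_. lborel))"
    using assms(7,8) coord_poly_matricization_det_gen_tensor by (intro coord_poly_zero_set_null) auto
  moreover have "?F \<theta> = 0" if "low_rep L M L2 rr (gen_tensor L L1 r1 (\<lambda>x. \<theta> (c x)))" for \<theta>
    using low_rep_imp_matricization_det_eq_0 that assms(1-3,5) by simp
  ultimately show ?thesis
    by (intro null_sets_completion_subset[OF _ null_sets_completionI]) auto
qed

lemma finite_param_index: "finite (param_index L M Lc r)"
proof (rule finite_subset)
  show "param_index L M Lc r \<subseteq> (SIGMA l:{..Lc}. {..<2 ^ L} \<times> {..<Suc (r l)} \<times> {..<M + r (l - 1)})"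
    by (auto simp: param_index_def intro: less_le_trans[OF _ div_le_dividend])
qed auto

lemma finite_shared_index: "finite (shared_index M Lc r)"
proof (rule finite_subset)
  show "shared_index M Lc r \<subseteq> (SIGMA l:{..Lc}. {..<Suc (r l)} \<times> {..<M + r (l - 1)})"
    by (auto simp: shared_index_def)
qed auto

lemma shared_index_if_param_index:
  "(l, j, g, a) \<in> param_index L M Lc r \<Longrightarrow> (l, g, a) \<in> shared_index M Lc r"
  by (auto simp: param_index_def shared_index_def)

theorem theorem2:
  fixes L M L1 L2 :: nat and r1 :: "nat \<Rightarrow> nat"
  assumes "L1 \<le> L" and "L2 < L1" and "1 \<le> L2"
    and "\<forall>l<L1. r1 l > 0"
  defines "rr \<equiv> Min (r1 ` {..<L2} \<union> {M})"
  shows "{\<theta> \<in> param_index L M L1 r1 \<rightarrow>\<^sub>E UNIV.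
            low_rep L M L2 rr (gen_tensor L L1 r1 \<theta>)}
           \<in> null_sets (completion (PiM (param_index L M L1 r1) (\<lambda>_. lborel))) \<and>
         {\<theta>s \<in> shared_index M L1 r1 \<rightarrow>\<^sub>E UNIV.
            low_rep L M L2 rr (gen_tensor L L1 r1 (expand_shared \<theta>s))}
           \<in> null_sets (completion (PiM (shared_index M L1 r1) (\<lambda>_. lborel)))"
proof
  have rr: "rr \<le> M" "\<forall>l<L2. rr \<le> r1 l"
    unfolding rr_def by (auto intro: Min_le)
  note null = null_sets_low_rep_gen_tensor[OF assms(1-4) rr]
  show "{\<theta> \<in> param_index L M L1 r1 \<rightarrow>\<^sub>E UNIV. low_rep L M L2 rr (gen_tensor L L1 r1 \<theta>)}
      \<in> null_sets (completion (PiM (param_index L M L1 r1) (\<lambda>_. lborel)))"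
    using null[OF finite_param_index, where c = "\<lambda>x. x"
        and \<theta>\<^sub>0 = "restrict (\<lambda>(l, j, g, a). witness_param L1 L2 l g a) (param_index L M L1 r1)"]
    by simp
  have expand: "expand_shared = (\<lambda>\<theta>s x. \<theta>s (case x of (l, j, g, a) \<Rightarrow> (l, g, a)))"
    by (auto simp: expand_shared_def fun_eq_iff)
  show "{\<theta>s \<in> shared_index M L1 r1 \<rightarrow>\<^sub>E UNIV. low_rep L M L2 rr (gen_tensor L L1 r1 (expand_shared \<theta>s))}
      \<in> null_sets (completion (PiM (shared_index M L1 r1) (\<lambda>_. lborel)))"
    unfolding expand by (rule null[OF finite_shared_index, where c = "\<lambda>(l, j, g, a). (l, g, a)"
        and \<theta>\<^sub>0 = "restrict (\<lambda>(l, g, a). witness_param L1 L2 l g a) (shared_index M L1 r1)"],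
        simp_all add: shared_index_if_param_index)
qed

end
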